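(* Let $r\geq 2$ and $0\leq \alpha \leq 1-\frac{1}{r}$. Let $G$ be a graph of order $n\ge 2$, let $\mathbf{x}=(x_{1}, \dots, x_{n})$ be a non-negative unit eigenvector of $A_{\alpha}(G)$ corresponding to $\lambda_{\alpha}(G)$, and let $w\in V(G)$ satisfy $x_{w}=\min \{x_{1}, \dots, x_{n}\}$. Then $$\lambda_{\alpha}(G-w)\geq \lambda_{\alpha}(G)\frac{1-2x^2_{w}}{1-x^2_{w}}-\alpha\frac{1-nx^2_{w}}{1-x^2_{w}}.$$
   Context: $A_\alpha(G)=\alpha D(G)+(1-\alpha)A(G)$, where $A(G)$ is the adjacency matrix and $D(G)$ the diagonal degree matrix of $G$; $\lambda_\alpha(G)$ is its largest eigenvalue. $G-w$ is the graph obtained by deleting vertex $w$ and its incident edges. *)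

theory Defs
  imports Complex_Main
begin

definition simple_graph :: "'a set \<Rightarrow> ('a \<Rightarrow> 'a \<Rightarrow> bool) \<Rightarrow> bool" where
  "simple_graph V E \<longleftrightarrow> finite V \<and> (\<forall>u v. E u v \<longrightarrow> u \<in> V \<and> v \<in> V)
     \<and> (\<forall>u v. E u v \<longrightarrow> E v u) \<and> (\<forall>u. \<not> E u u)"

definition degree :: "'a set \<Rightarrow> ('a \<Rightarrow> 'a \<Rightarrow> bool) \<Rightarrow> 'a \<Rightarrow> nat" where
  "degree V E v = card {u \<in> V. E v u}"

definition A_alpha :: "real \<Rightarrow> 'a set \<Rightarrow> ('a \<Rightarrow> 'a \<Rightarrow> bool) \<Rightarrow> 'a \<Rightarrow> 'a \<Rightarrow> real" where
  "A_alpha \<alpha> V E u v =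
     (if u = v then \<alpha> * real (degree V E u) else 0) + (1 - \<alpha>) * (if E u v then 1 else 0)"

definition is_eigenvector :: "('a \<Rightarrow> 'a \<Rightarrow> real) \<Rightarrow> 'a set \<Rightarrow> real \<Rightarrow> ('a \<Rightarrow> real) \<Rightarrow> bool" where
  "is_eigenvector M V lam x \<longleftrightarrow> (\<forall>v. v \<notin> V \<longrightarrow> x v = 0) \<and> (\<exists>v\<in>V. x v \<noteq> 0)
     \<and> (\<forall>u\<in>V. (\<Sum>v\<in>V. M u v * x v) = lam * x u)"

definition is_eigenvalue :: "('a \<Rightarrow> 'a \<Rightarrow> real) \<Rightarrow> 'a set \<Rightarrow> real \<Rightarrow> bool" where
  "is_eigenvalue M V lam \<longleftrightarrow> (\<exists>x. is_eigenvector M V lam x)"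

text \<open>lambda_alpha(G): the largest eigenvalue of A_alpha(G) (a real symmetric matrix,
  so all its eigenvalues are real).\<close>
definition lambda_alpha :: "real \<Rightarrow> 'a set \<Rightarrow> ('a \<Rightarrow> 'a \<Rightarrow> bool) \<Rightarrow> real" where
  "lambda_alpha \<alpha> V E = Max {lam. is_eigenvalue (A_alpha \<alpha> V E) V lam}"

definition del_vertex_V :: "'a set \<Rightarrow> 'a \<Rightarrow> 'a set" where
  "del_vertex_V V w = V - {w}"

definition del_vertex_E :: "('a \<Rightarrow> 'a \<Rightarrow> bool) \<Rightarrow> 'a \<Rightarrow> 'a \<Rightarrow> 'a \<Rightarrow> bool" where
  "del_vertex_E E w = (\<lambda>u v. E u v \<and> u \<noteq> w \<and> v \<noteq> w)"

end

theory Submission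
  imports Defs "HOL-Analysis.Analysis" "Jordan_Normal_Form.Spectral_Radius"
begin

text \<open>Restrict the unit eigenvector x to V - {w}. As A_\<alpha>(G - w) is symmetric, its largest
  eigenvalue bounds the quadratic form of this restriction by its squared norm 1 - x_w^2
  (a maximiser of the form on the unit sphere exists by compactness and is an eigenvector).
  Compared with x^T A_\<alpha>(G) x = \<lambda>_\<alpha>(G), the form loses the row and column of w, which
  the eigenvalue equation at w evaluates, and the term \<alpha> x_u^2 of every neighbour u of w,
  whose degree drops; minimality of x_w bounds the sum over the neighbours of x_u^2 - x_w^2
  by 1 - n x_w^2.\<close>

lemma finite_eigenvalues:
  fixes M :: "'a \<Rightarrow> 'a \<Rightarrow> real"
  assumes fin: "finite V"
  shows "finite {lam. is_eigenvalue M V lam}"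
proof -
  obtain f where f: "bij_betw f {0..<card V} V"
    using ex_bij_betw_nat_finite[OF fin] by blast
  define n where "n = card V"
  define B where "B = mat n n (\<lambda>(i,j). M (f i) (f j))"
  have Bc: "B \<in> carrier_mat n n" unfolding B_def by simp
  have "{lam. is_eigenvalue M V lam} \<subseteq> spectrum B"
  proof
    fix lam assume "lam \<in> {lam. is_eigenvalue M V lam}"
    then obtain x where x: "is_eigenvector M V lam x"
      unfolding is_eigenvalue_def by auto
    define v where "v = vec n (\<lambda>i. x (f i))"
    from x obtain u where u: "u \<in> V" "x u \<noteq> 0" unfolding is_eigenvector_def by auto
    then obtain i where i: "i < n" "f i = u"
      using f unfolding n_def bij_betw_def by (metis atLeastLessThan_iff imageE)
    have "v \<noteq> 0\<^sub>v n"
    proof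
      assume "v = 0\<^sub>v n"
      then have "v $ i = 0" using i by simp
      then show False using i u unfolding v_def by simp
    qed
    moreover have "B *\<^sub>v v = lam \<cdot>\<^sub>v v"
    proof (rule eq_vecI)
      fix i assume "i < dim_vec (lam \<cdot>\<^sub>v v)"
      then have i: "i < n" unfolding v_def by simp
      then have fi: "f i \<in> V" using f unfolding n_def bij_betw_def by auto
      have "(B *\<^sub>v v) $ i = (\<Sum>j<n. M (f i) (f j) * x (f j))"
        using i unfolding B_def v_def by (simp add: mult_mat_vec_def scalar_prod_def atLeast0LessThan)
      also have "\<dots> = (\<Sum>u\<in>V. M (f i) u * x u)"
        using sum.reindex_bij_betw[OF f, of "\<lambda>u. M (f i) u * x u"] unfolding n_def
        by (simp add: atLeast0LessThan)
      also have "\<dots> = lam * x (f i)" using x fi unfolding is_eigenvector_def by auto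
      finally show "(B *\<^sub>v v) $ i = (lam \<cdot>\<^sub>v v) $ i" using i unfolding v_def by simp
    qed (simp add: B_def v_def)
    ultimately have "eigenvector B v lam" unfolding eigenvector_def v_def using Bc by auto
    then show "lam \<in> spectrum B" unfolding spectrum_def eigenvalue_def by auto
  qed
  then show ?thesis using card_finite_spectrum(1)[OF Bc] finite_subset by blast
qed

definition bilin_form :: "('a \<Rightarrow> 'a \<Rightarrow> real) \<Rightarrow> 'a set \<Rightarrow> ('a \<Rightarrow> real) \<Rightarrow> ('a \<Rightarrow> real) \<Rightarrow> real"
  where "bilin_form M V a b = (\<Sum>u\<in>V. \<Sum>v\<in>V. a u * M u v * b v)"

lemma bilin_form_cong:
  assumes "\<And>v. v \<in> V \<Longrightarrow> a v = a' v" and "\<And>v. v \<in> V \<Longrightarrow> b v = b' v"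
  shows "bilin_form M V a b = bilin_form M V a' b'"
  unfolding bilin_form_def using assms by simp

lemma bilin_form_commute:
  assumes "\<And>u v. u \<in> V \<Longrightarrow> v \<in> V \<Longrightarrow> M u v = M v u"
  shows "bilin_form M V a b = bilin_form M V b a"
  unfolding bilin_form_def by (subst sum.swap) (simp add: assms mult.commute mult.left_commute)

lemma bilin_form_eq_sum_rows: "bilin_form M V a b = (\<Sum>u\<in>V. a u * (\<Sum>v\<in>V. M u v * b v))"
  unfolding bilin_form_def by (simp add: sum_distrib_left mult.assoc)

lemma bilin_form_scale: "bilin_form M V (\<lambda>i. c * a i) (\<lambda>i. c * a i) = c\<^sup>2 * bilin_form M V a a"
  unfolding bilin_form_def by (simp add: sum_distrib_left power2_eq_square algebra_simps)

lemma bilin_form_add_scaled: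
  "bilin_form M V (\<lambda>i. a i + t * b i) (\<lambda>i. a i + t * b i)
     = bilin_form M V a a + t * (bilin_form M V a b + bilin_form M V b a) + t\<^sup>2 * bilin_form M V b b"
proof -
  have "\<And>u v. (a u + t * b u) * M u v * (a v + t * b v)
     = a u * M u v * a v + t * (a u * M u v * b v + b u * M u v * a v) + t\<^sup>2 * (b u * M u v * b v)"
    by (simp add: algebra_simps power2_eq_square)
  then show ?thesis unfolding bilin_form_def
    by (simp add: sum.distrib sum_distrib_left distrib_left)
qed

lemma nonpos_if_linear_plus_quadratic_nonpos:
  fixes a c :: real
  assumes "\<And>t. t > 0 \<Longrightarrow> a * t + c * t\<^sup>2 \<le> 0"
  shows "a \<le> 0"
proof (rule ccontr)
  assume "\<not> a \<le> 0"
  define t where "t = a / (\<bar>c\<bar> + 1)"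
  have t: "t > 0" using \<open>\<not> a \<le> 0\<close> unfolding t_def by simp
  have "t * (a + c * t) \<le> 0" using assms[OF t] by (simp add: algebra_simps power2_eq_square)
  then have "a + c * t \<le> 0" using t by (simp add: mult_le_0_iff)
  moreover have "\<bar>c\<bar> * t < a"
    using \<open>\<not> a \<le> 0\<close> unfolding t_def by (simp add: field_simps)
  moreover have "- (\<bar>c\<bar> * t) \<le> c * t" using t by (simp add: abs_if)
  ultimately show False by linarith
qed

lemma exists_rayleigh_maximizer:
  fixes M :: "'a \<Rightarrow> 'a \<Rightarrow> real"
  assumes fin: "finite V" and ne: "V \<noteq> {}"
  obtains z where "\<forall>v. v \<notin> V \<longrightarrow> z v = 0" and "(\<Sum>v\<in>V. (z v)\<^sup>2) = 1"
    and "\<And>y. bilin_form M V y y \<le> bilin_form M V z z * (\<Sum>v\<in>V. (y v)\<^sup>2)"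
proof -
  define N where "N = (\<lambda>z::'a \<Rightarrow> real. \<Sum>v\<in>V. (z v)\<^sup>2)"
  define K :: "('a \<Rightarrow> real) set" where "K = PiE UNIV (\<lambda>i. if i \<in> V then {-1..1} else {0})"
  define S where "S = K \<inter> {z. N z = 1}"
  have "compactin (product_topology (\<lambda>i. euclidean) UNIV) K"
    unfolding K_def compactin_PiE by auto
  moreover have "closed {z. N z = 1}" unfolding N_def
    by (intro closed_Collect_eq continuous_intros continuous_on_product_coordinates)
  ultimately have "compact S" unfolding S_def euclidean_product_topology by auto
  obtain v0 where v0: "v0 \<in> V" using ne by auto
  define e :: "'a \<Rightarrow> real" where "e = (\<lambda>i. if i = v0 then 1 else 0)"
  have "N e = (\<Sum>v\<in>V. if v = v0 then 1 else 0)"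
    unfolding N_def by (rule sum.cong) (auto simp: e_def)
  then have "e \<in> S" unfolding S_def K_def using v0 fin by (auto simp: e_def)
  then have "S \<noteq> {}" by auto
  moreover have "continuous_on UNIV (\<lambda>z. bilin_form M V z z)"
    unfolding bilin_form_def by (intro continuous_intros continuous_on_product_coordinates)
  ultimately obtain z where "z \<in> S" and zmax: "\<And>y. y \<in> S \<Longrightarrow> bilin_form M V y y \<le> bilin_form M V z z"
    using continuous_attains_sup[OF \<open>compact S\<close> _ continuous_on_subset[OF _ subset_UNIV]] by blast
  then have zsupp: "\<forall>v. v \<notin> V \<longrightarrow> z v = 0" and Nz: "N z = 1"
    unfolding S_def K_def by (auto simp: PiE_iff split: if_splits)
  have "bilin_form M V y y \<le> bilin_form M V z z * N y" for y
  proof (cases "N y = 0")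
    case True
    then have "\<And>v. v \<in> V \<Longrightarrow> y v = 0" unfolding N_def using fin by (simp add: sum_nonneg_eq_0_iff)
    then have "bilin_form M V y y = bilin_form M V (\<lambda>_. 0) (\<lambda>_. 0)" by (intro bilin_form_cong) auto
    then show ?thesis using True by (simp add: bilin_form_def)
  next
    case False
    then have Npos: "N y > 0" unfolding N_def by (simp add: order_less_le sum_nonneg)
    define s where "s = sqrt (N y)"
    have s2: "s\<^sup>2 = N y" unfolding s_def using Npos by simp
    define y' where "y' = (\<lambda>i. if i \<in> V then y i / s else 0)"
    have Ny': "N y' = 1" unfolding N_def y'_def using s2 Npos
      by (simp add: power_divide sum_divide_distrib[symmetric] N_def)
    have "y' \<in> K" unfolding K_def
    proof (rule PiE_I)
      fix i
      have "(y' i)\<^sup>2 \<le> 1" if "i \<in> V"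
        using member_le_sum[of i V "\<lambda>v. (y' v)\<^sup>2"] that fin Ny' unfolding N_def by simp
      then have "y' i \<in> {-1..1}" if "i \<in> V" using that by (auto simp: abs_square_le_1 abs_le_iff)
      then show "y' i \<in> (if i \<in> V then {-1..1} else {0})" by (simp add: y'_def)
    qed simp
    then have "bilin_form M V y' y' \<le> bilin_form M V z z" using zmax Ny' unfolding S_def by simp
    moreover have "bilin_form M V y' y' = bilin_form M V y y / N y"
    proof -
      have "bilin_form M V y' y' = bilin_form M V (\<lambda>i. (1 / s) * y i) (\<lambda>i. (1 / s) * y i)"
        by (intro bilin_form_cong) (simp_all add: y'_def)
      then show ?thesis unfolding bilin_form_scale using s2 by (simp add: power_divide)
    qed
    ultimately show ?thesis using Npos by (simp add: divide_le_eq mult.commute)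
  qed
  then show thesis using that zsupp Nz unfolding N_def by blast
qed

text \<open>First variation: perturbing z by t times its residual h = Mz - \<mu>z changes
  the Rayleigh inequality by 2t|h|^2 + O(t^2), so the residual vanishes.\<close>

lemma rayleigh_maximizer_is_eigenvector:
  fixes M :: "'a \<Rightarrow> 'a \<Rightarrow> real"
  assumes sym: "\<And>u v. u \<in> V \<Longrightarrow> v \<in> V \<Longrightarrow> M u v = M v u"
    and fin: "finite V" and zsupp: "\<forall>v. v \<notin> V \<longrightarrow> z v = 0" and unit: "(\<Sum>v\<in>V. (z v)\<^sup>2) = 1"
    and max: "\<And>y. bilin_form M V y y \<le> bilin_form M V z z * (\<Sum>v\<in>V. (y v)\<^sup>2)"
  shows "is_eigenvector M V (bilin_form M V z z) z"
proof -
  define \<mu> where "\<mu> = bilin_form M V z z"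
  define h where "h = (\<lambda>u. (\<Sum>v\<in>V. M u v * z v) - \<mu> * z u)"
  define N where "N = (\<lambda>y::'a \<Rightarrow> real. \<Sum>v\<in>V. (y v)\<^sup>2)"
  have "(2 * N h) * t + (bilin_form M V h h - \<mu> * N h) * t\<^sup>2 \<le> 0" for t
  proof -
    have "bilin_form M V h z - \<mu> * (\<Sum>v\<in>V. h v * z v) = N h"
      unfolding bilin_form_eq_sum_rows N_def h_def
      by (simp add: sum_subtractf sum_distrib_left algebra_simps power2_eq_square)
    moreover have "N (\<lambda>i. z i + t * h i) = N z + 2 * t * (\<Sum>v\<in>V. h v * z v) + t\<^sup>2 * N h"
      unfolding N_def
      by (simp add: power2_sum power_mult_distrib sum.distrib sum_distrib_left algebra_simps)
    ultimately show ?thesis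
      using max[of "\<lambda>i. z i + t * h i"] unit bilin_form_commute[OF sym, where a = z and b = h]
      unfolding bilin_form_add_scaled \<mu>_def N_def by (simp add: algebra_simps)
  qed
  then have "2 * N h \<le> 0" by (rule nonpos_if_linear_plus_quadratic_nonpos)
  then have "N h = 0" unfolding N_def by (simp add: order_antisym sum_nonneg)
  then have "\<forall>u\<in>V. h u = 0" unfolding N_def using fin by (simp add: sum_nonneg_eq_0_iff)
  moreover have "\<exists>v\<in>V. z v \<noteq> 0" using unit by (metis (no_types, lifting) power_zero_numeral sum.neutral zero_neq_one)
  ultimately show ?thesis
    unfolding is_eigenvector_def \<mu>_def h_def using zsupp by simp
qed

lemma bilin_form_le_Max_eigenvalue:
  fixes M :: "'a \<Rightarrow> 'a \<Rightarrow> real"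
  assumes "\<And>u v. u \<in> V \<Longrightarrow> v \<in> V \<Longrightarrow> M u v = M v u" and "finite V" and "V \<noteq> {}"
  shows "bilin_form M V y y \<le> Max {lam. is_eigenvalue M V lam} * (\<Sum>v\<in>V. (y v)\<^sup>2)"
proof -
  obtain z where zsupp: "\<forall>v. v \<notin> V \<longrightarrow> z v = 0" and unit: "(\<Sum>v\<in>V. (z v)\<^sup>2) = 1"
    and max: "\<And>y. bilin_form M V y y \<le> bilin_form M V z z * (\<Sum>v\<in>V. (y v)\<^sup>2)"
    using exists_rayleigh_maximizer[OF assms(2,3)] by blast
  have "is_eigenvalue M V (bilin_form M V z z)"
    unfolding is_eigenvalue_def using rayleigh_maximizer_is_eigenvector[OF assms(1,2) zsupp unit max] by blast
  then have "bilin_form M V z z \<le> Max {lam. is_eigenvalue M V lam}"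
    using finite_eigenvalues[OF assms(2)] by (simp add: Max_ge)
  then show ?thesis
    using max[of y] by (meson mult_right_mono order_trans sum_nonneg zero_le_power2)
qed

lemma A_alpha_symmetric:
  assumes "\<And>u v. E u v \<Longrightarrow> E v u"
  shows "A_alpha \<alpha> V E u v = A_alpha \<alpha> V E v u"
  using assms unfolding A_alpha_def by auto

lemma bilin_form_A_alpha_le_lambda_alpha:
  assumes "simple_graph V E" and "V \<noteq> {}"
  shows "bilin_form (A_alpha \<alpha> V E) V y y \<le> lambda_alpha \<alpha> V E * (\<Sum>v\<in>V. (y v)\<^sup>2)"
  unfolding lambda_alpha_def using assms
  by (intro bilin_form_le_Max_eigenvalue A_alpha_symmetric) (auto simp: simple_graph_def)

lemma sum_A_alpha_row:
  assumes "finite V" and "u \<in> V"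
  shows "(\<Sum>v\<in>V. A_alpha \<alpha> V E u v * x v)
         = \<alpha> * real (Defs.degree V E u) * x u + (1 - \<alpha>) * (\<Sum>v\<in>{v\<in>V. E u v}. x v)"
proof -
  have "(\<Sum>v\<in>V. A_alpha \<alpha> V E u v * x v)
      = (\<Sum>v\<in>V. (if v = u then \<alpha> * real (Defs.degree V E u) * x u else 0) + (1 - \<alpha>) * (if E u v then x v else 0))"
    unfolding A_alpha_def by (rule sum.cong) (auto simp: algebra_simps)
  then show ?thesis
    using assms by (simp add: sum.distrib sum_distrib_left[symmetric] sum.inter_filter)
qed

lemma simple_graph_del_vertex:
  "simple_graph V E \<Longrightarrow> simple_graph (del_vertex_V V w) (del_vertex_E E w)"
  unfolding simple_graph_def del_vertex_V_def del_vertex_E_def by auto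

lemma degree_del_vertex:
  assumes "finite V" and "w \<in> V" and "u \<noteq> w"
  shows "real (Defs.degree (V - {w}) (del_vertex_E E w) u) = real (Defs.degree V E u) - (if E u w then 1 else 0)"
proof -
  have "{v \<in> V - {w}. del_vertex_E E w u v} = {v \<in> V. E u v} - {w}"
    using assms(3) unfolding del_vertex_E_def by auto
  moreover have "E u w \<Longrightarrow> card {v \<in> V. E u v} > 0"
    using assms(1,2) by (auto simp: card_gt_0_iff)
  ultimately show ?thesis
    unfolding Defs.degree_def using assms(1,2)
    by (cases "E u w") (simp_all add: card_Diff_singleton_if of_nat_diff Suc_le_eq)
qed

lemma A_alpha_del_vertex:
  assumes "finite V" and "w \<in> V" and "u \<noteq> w" and "v \<noteq> w"
  shows "A_alpha \<alpha> (V - {w}) (del_vertex_E E w) u v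
    = A_alpha \<alpha> V E u v - (if u = v \<and> E u w then \<alpha> else 0)"
  unfolding A_alpha_def degree_del_vertex[OF assms(1-3)] using assms(3,4)
  by (auto simp: del_vertex_E_def algebra_simps)

lemma sum_A_alpha_del_vertex_row:
  assumes "finite V" and "w \<in> V" and "u \<in> V" and "u \<noteq> w"
  shows "(\<Sum>v\<in>V - {w}. A_alpha \<alpha> (V - {w}) (del_vertex_E E w) u v * x v)
    = (\<Sum>v\<in>V. A_alpha \<alpha> V E u v * x v) - (if E u w then \<alpha> * x u + (1 - \<alpha>) * x w else 0)"
proof -
  have "(\<Sum>v\<in>V - {w}. A_alpha \<alpha> (V - {w}) (del_vertex_E E w) u v * x v)
      = (\<Sum>v\<in>V - {w}. A_alpha \<alpha> V E u v * x v - (if v = u then (if E u w then \<alpha> else 0) * x u else 0))"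
    by (rule sum.cong) (auto simp: A_alpha_del_vertex[OF assms(1,2,4)] algebra_simps)
  also have "\<dots> = (\<Sum>v\<in>V - {w}. A_alpha \<alpha> V E u v * x v) - (if E u w then \<alpha> * x u else 0)"
    using assms by (simp add: sum_subtractf)
  also have "(\<Sum>v\<in>V - {w}. A_alpha \<alpha> V E u v * x v) = (\<Sum>v\<in>V. A_alpha \<alpha> V E u v * x v) - A_alpha \<alpha> V E u w * x w"
    using assms(1,2) by (simp add: sum_diff1)
  also have "A_alpha \<alpha> V E u w = (if E u w then 1 - \<alpha> else 0)"
    using assms(4) unfolding A_alpha_def by simp
  finally show ?thesis by (cases "E u w") (simp_all add: algebra_simps)
qed

lemma bilin_form_del_vertex_eigenvector:
  assumes G: "simple_graph V E" and w: "w \<in> V"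
    and eig: "is_eigenvector (A_alpha \<alpha> V E) V lam x" and unit: "(\<Sum>v\<in>V. (x v)\<^sup>2) = 1"
  shows "bilin_form (A_alpha \<alpha> (V - {w}) (del_vertex_E E w)) (V - {w}) x x
    = lam * (1 - 2 * (x w)\<^sup>2) - \<alpha> * (\<Sum>u\<in>{u\<in>V. E w u}. (x u)\<^sup>2 - (x w)\<^sup>2)"
proof -
  define Nw where "Nw = {u\<in>V. E w u}"
  have fin: "finite V" using G by (simp add: simple_graph_def)
  have row: "(\<Sum>v\<in>V. A_alpha \<alpha> V E u v * x v) = lam * x u" if "u \<in> V" for u
    using eig that by (simp add: is_eigenvector_def)
  have Nw_eq: "{u \<in> V - {w}. E u w} = Nw"
    using G unfolding Nw_def simple_graph_def by blast
  have "bilin_form (A_alpha \<alpha> (V - {w}) (del_vertex_E E w)) (V - {w}) x x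
      = (\<Sum>u\<in>V - {w}. lam * (x u)\<^sup>2 - (if E u w then \<alpha> * (x u)\<^sup>2 + (1 - \<alpha>) * x w * x u else 0))"
    unfolding bilin_form_eq_sum_rows
  proof (rule sum.cong)
    fix u assume "u \<in> V - {w}"
    then have u: "u \<in> V" "u \<noteq> w" by auto
    show "x u * (\<Sum>v\<in>V - {w}. A_alpha \<alpha> (V - {w}) (del_vertex_E E w) u v * x v)
      = lam * (x u)\<^sup>2 - (if E u w then \<alpha> * (x u)\<^sup>2 + (1 - \<alpha>) * x w * x u else 0)"
      unfolding sum_A_alpha_del_vertex_row[OF fin w u] row[OF u(1)]
      by (simp add: algebra_simps power2_eq_square)
  qed simp
  also have "\<dots> = lam * (\<Sum>u\<in>V - {w}. (x u)\<^sup>2) - (\<Sum>u\<in>Nw. \<alpha> * (x u)\<^sup>2 + (1 - \<alpha>) * x w * x u)"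
    by (simp only: fin finite_Diff sum_subtractf sum_distrib_left Nw_eq flip: sum.inter_filter)
  also have "(\<Sum>u\<in>V - {w}. (x u)\<^sup>2) = 1 - (x w)\<^sup>2"
    using fin w unit by (simp add: sum_diff1)
  also have "(\<Sum>u\<in>Nw. \<alpha> * (x u)\<^sup>2 + (1 - \<alpha>) * x w * x u)
      = \<alpha> * (\<Sum>u\<in>Nw. (x u)\<^sup>2) + x w * ((1 - \<alpha>) * (\<Sum>u\<in>Nw. x u))"
    by (simp add: sum.distrib sum_distrib_left mult.assoc mult.left_commute)
  also have "(1 - \<alpha>) * (\<Sum>u\<in>Nw. x u) = lam * x w - \<alpha> * real (card Nw) * x w"
    using sum_A_alpha_row[OF fin w, of \<alpha> E x] row[OF w] unfolding Nw_def Defs.degree_def by simp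
  finally show ?thesis
    unfolding Nw_def[symmetric] by (simp add: sum_subtractf algebra_simps power2_eq_square)
qed

lemma two_mul_min_le_sum:
  fixes f :: "'a \<Rightarrow> real"
  assumes "finite V" and "w \<in> V" and "V - {w} \<noteq> {}"
    and "\<And>v. v \<in> V \<Longrightarrow> f w \<le> f v" and "\<And>v. v \<in> V \<Longrightarrow> 0 \<le> f v"
  shows "2 * f w \<le> sum f V"
proof -
  obtain v where v: "v \<in> V" "v \<noteq> w" using assms(3) by blast
  have "sum f {w, v} \<le> sum f V"
    using assms v by (intro sum_mono2) auto
  then show ?thesis using assms(4)[OF v(1)] v(2) by simp
qed

theorem lemma3p3:
  fixes r :: nat and \<alpha> :: real and V :: "'a set" and E :: "'a \<Rightarrow> 'a \<Rightarrow> bool"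
    and x :: "'a \<Rightarrow> real" and w :: 'a
  assumes "r \<ge> 2"
    and "0 \<le> \<alpha>" and "\<alpha> \<le> 1 - 1 / real r"
    and "simple_graph V E"
    and "card V \<ge> 2"
    and "is_eigenvector (A_alpha \<alpha> V E) V (lambda_alpha \<alpha> V E) x"
    and "\<forall>v\<in>V. x v \<ge> 0"
    and "(\<Sum>v\<in>V. (x v)\<^sup>2) = 1"
    and "w \<in> V" and "x w = Min (x ` V)"
  shows "lambda_alpha \<alpha> (del_vertex_V V w) (del_vertex_E E w)
           \<ge> lambda_alpha \<alpha> V E * (1 - 2 * (x w)\<^sup>2) / (1 - (x w)\<^sup>2)
             - \<alpha> * (1 - real (card V) * (x w)\<^sup>2) / (1 - (x w)\<^sup>2)"
proof -
  have fin: "finite V" using assms(4) by (simp add: simple_graph_def)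
  have min_sq: "(x w)\<^sup>2 \<le> (x v)\<^sup>2" if "v \<in> V" for v
  proof (rule power_mono)
    show "x w \<le> x v" using fin that by (simp add: assms(10))
  qed (use assms(7,9) in simp)
  have "card (V - {w}) > 0" using fin assms(5,9) by (simp add: card_Diff_singleton)
  then have ne: "V - {w} \<noteq> {}" by (intro notI) simp
  have "2 * (x w)\<^sup>2 \<le> 1"
    using two_mul_min_le_sum[OF fin assms(9) ne, of "\<lambda>v. (x v)\<^sup>2"] min_sq assms(8) by simp
  then have pos: "1 - (x w)\<^sup>2 > 0" by simp
  have "(\<Sum>u\<in>{u\<in>V. E w u}. (x u)\<^sup>2 - (x w)\<^sup>2) \<le> (\<Sum>u\<in>V. (x u)\<^sup>2 - (x w)\<^sup>2)"
    using fin min_sq by (intro sum_mono2) auto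
  also have "\<dots> = 1 - real (card V) * (x w)\<^sup>2"
    using assms(8) by (simp add: sum_subtractf)
  finally have "lambda_alpha \<alpha> V E * (1 - 2 * (x w)\<^sup>2) - \<alpha> * (1 - real (card V) * (x w)\<^sup>2)
      \<le> bilin_form (A_alpha \<alpha> (V - {w}) (del_vertex_E E w)) (V - {w}) x x"
    unfolding bilin_form_del_vertex_eigenvector[OF assms(4,9,6,8)]
    using assms(2) by (simp add: mult_left_mono)
  also have "\<dots> \<le> lambda_alpha \<alpha> (del_vertex_V V w) (del_vertex_E E w) * (1 - (x w)\<^sup>2)"
  proof -
    have "(\<Sum>v\<in>V - {w}. (x v)\<^sup>2) = 1 - (x w)\<^sup>2" using fin assms(8,9) by (simp add: sum_diff1)
    then show ?thesis
      using bilin_form_A_alpha_le_lambda_alpha[OF simple_graph_del_vertex[OF assms(4)], of w \<alpha> x] ne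
      unfolding del_vertex_V_def by simp
  qed
  finally show ?thesis
    using pos by (simp add: diff_divide_distrib[symmetric] divide_le_eq)
qed

end
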